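(* Let $q>0$, let $z\in\mathbb{C}$ with $\mathrm{Re}(z)>-1$, and let $\alpha\in\{0,1,2,\ldots\}$. Then $$\zeta_E(z,q)=\sum_{n=0}^{\alpha}\frac{(-1)^n}{(n+q)^{z}}-\frac12\,\frac{(-1)^{\alpha}}{(\alpha+q)^{z}}-\frac12\, z\int_{\alpha}^{\infty}\frac{\overline E_0(-t)}{(t+q)^{z+1}}\,dt .$$
   Context: For $q>0$, the alternating Hurwitz zeta function is $\zeta_E(z,q)=\sum_{n=0}^\infty (-1)^n (n+q)^{-z}$ for $\mathrm{Re}(z)>0$; it extends by analytic continuation to an entire function of $z$, and $\zeta_E(z,q)$ denotes this continuation. $\overline E_0$ is the $0$-th quasi-periodic Euler function: $\overline E_0(t)=1$ for $0\le t<1$ and $\overline E_0(t+1)=-\overline E_0(t)$ for all real $t$; for non-integer $t$ it has the Fourier expansion $\overline E_0(t)=\frac4\pi\sum_{k=0}^\infty\frac{\sin((2k+1)\pi t)}{2k+1}$. *)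

theory Defs
  imports "HOL-Analysis.Analysis"
begin

text \<open>The 0-th quasi-periodic Euler function: equal to 1 on [0,1) and
  satisfying E(t+1) = - E(t); explicitly E(t) = (-1)^floor(t).\<close>
definition E0bar :: "real \<Rightarrow> real" where
  "E0bar t = (if even \<lfloor>t\<rfloor> then 1 else -1)"

definition zetaE :: "complex \<Rightarrow> real \<Rightarrow> complex" where
  "zetaE z q = (THE f. f holomorphic_on UNIV \<and>
      (\<forall>w. Re w > 0 \<longrightarrow>
         (\<lambda>n. (-1) ^ n / (complex_of_real (real n + q)) powr w) sums f w)) z"

end

theory Submission
  imports Defs "HOL-Complex_Analysis.Complex_Analysis"
begin

text \<open>Write \<open>a n = (n + q) powr -z\<close>. Summation by parts against \<open>(-1)^n\<close> (Euler's transform)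
  turns the alternating series into \<open>a 0 / 2 + 1/2 \<Sum>n. (-1)^n (a n - a (n + 1))\<close>; iterating it
  \<open>K\<close> times with forward differences, which decay like \<open>n powr (-Re z - K)\<close>, gives expressions
  holomorphic on \<open>Re z > 1 - K\<close> that agree on overlaps, hence the entire continuation of \<open>zetaE\<close>.
  On \<open>(n, n + 1)\<close> we have \<open>E0bar (-t) = -(-1)^n\<close>, and \<open>z\<close> times the integral of
  \<open>(t + q) powr (-z - 1)\<close> over \<open>[n, n + 1]\<close> is \<open>a n - a (n + 1)\<close>; so \<open>z\<close> times the integral over
  \<open>[\<alpha>, N]\<close> is minus a block of the once transformed series, which converges for \<open>Re z > -1\<close>.
  The integral itself converges (also at \<open>z = 0\<close>) because consecutive unit-interval integrals
  differ by \<open>O(n powr (-Re z - 2))\<close>.\<close>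

fun fdiff_powr :: "nat \<Rightarrow> real \<Rightarrow> complex \<Rightarrow> complex \<Rightarrow> complex" where
  "fdiff_powr 0 q s w = (w + of_real q) powr s"
| "fdiff_powr (Suc K) q s w = fdiff_powr K q s w - fdiff_powr K q s (w + 1)"

lemma fdiff_powr_has_field_derivative:
  assumes "Re w > -q"
  shows "((\<lambda>w. fdiff_powr K q s w) has_field_derivative s * fdiff_powr K q (s - 1) w) (at w)"
  using assms
proof (induction K arbitrary: w)
  case 0
  have "w + of_real q \<notin> \<real>\<^sub>\<le>\<^sub>0"
    using 0 by (auto simp: complex_nonpos_Reals_iff)
  from has_field_derivative_powr[OF this, of s] show ?case
    using DERIV_shift[of "\<lambda>w. w powr s" _ w "of_real q"] by simp
next
  case (Suc K)
  have "((\<lambda>w. fdiff_powr K q s w) has_field_derivative s * fdiff_powr K q (s - 1) (w + 1)) (at (w + 1))"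
    using Suc by simp
  then have "((\<lambda>w. fdiff_powr K q s (w + 1)) has_field_derivative s * fdiff_powr K q (s - 1) (w + 1)) (at w)"
    using DERIV_shift[of "\<lambda>w. fdiff_powr K q s w" _ w 1] by simp
  from DERIV_diff[OF Suc.IH[OF Suc.prems] this] show ?case
    by (simp add: algebra_simps)
qed

lemma holomorphic_on_fdiff_powr:
  "f holomorphic_on S \<Longrightarrow> (\<lambda>z. fdiff_powr K q (f z) w) holomorphic_on S"
  by (induction K arbitrary: w) (simp_all add: holomorphic_on_diff holomorphic_on_powr_right)

lemma powr_le_on_unit_shift:
  fixes q x y e E :: real
  assumes "q > 0" "0 \<le> x" "x \<le> y" "y \<le> x + 1" "\<bar>e\<bar> \<le> E"
  shows "(y + q) powr e \<le> (1 + 1/q) powr E * (x + q) powr e"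
proof (cases "e \<le> 0")
  case True
  have "(y + q) powr e \<le> (x + q) powr e"
    using True assms by (intro powr_mono2') auto
  also have "\<dots> \<le> (1 + 1/q) powr E * (x + q) powr e"
  proof -
    have "1 \<le> (1 + 1/q) powr E"
      using assms by (intro ge_one_powr_ge_zero) auto
    from mult_right_mono[OF this, of "(x + q) powr e"] show ?thesis
      by simp
  qed
  finally show ?thesis .
next
  case False
  have "y + q \<le> (1 + 1/q) * (x + q)"
  proof -
    have "(1 + 1/q) * (x + q) = x + q + x/q + 1"
      using assms by (simp add: field_simps)
    moreover have "x/q \<ge> 0"
      using assms by simp
    ultimately show ?thesis
      using assms by linarith
  qed
  then have "(y + q) powr e \<le> ((1 + 1/q) * (x + q)) powr e"
    using False assms by (intro powr_mono2) auto
  also have "\<dots> = (1 + 1/q) powr e * (x + q) powr e"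
    using assms by (simp add: powr_mult)
  also have "\<dots> \<le> (1 + 1/q) powr E * (x + q) powr e"
    using assms by (intro mult_right_mono powr_mono) auto
  finally show ?thesis .
qed

lemma norm_fdiff_powr_Suc_le:
  assumes "q > 0" and "0 \<le> x"
    and "\<And>t. x \<le> t \<Longrightarrow> t \<le> x + 1 \<Longrightarrow> norm (s * fdiff_powr K q (s - 1) (of_real t)) \<le> B"
  shows "norm (fdiff_powr (Suc K) q s (of_real x)) \<le> B"
proof -
  have segment: "\<exists>t. w = of_real t \<and> x \<le> t \<and> t \<le> x + 1"
    if "w \<in> closed_segment (of_real x) (of_real (x + 1))" for w :: complex
    using that unfolding closed_segment_of_real closed_segment_eq_real_ivl by auto
  have "norm (fdiff_powr K q s (of_real x) - fdiff_powr K q s (of_real (x + 1)))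
        \<le> B * norm (of_real x - of_real (x + 1) :: complex)"
  proof (rule field_differentiable_bound)
    fix w assume "w \<in> closed_segment (of_real x) (of_real (x + 1) :: complex)"
    then obtain t where t: "w = of_real t" "x \<le> t" "t \<le> x + 1"
      using segment by blast
    then show "norm (s * fdiff_powr K q (s - 1) w) \<le> B"
      using assms(3) by simp
    have "Re w > -q"
      using t assms(1,2) by simp
    then show "((\<lambda>w. fdiff_powr K q s w) has_field_derivative s * fdiff_powr K q (s - 1) w)
                 (at w within closed_segment (of_real x) (of_real (x + 1)))"
      by (rule has_field_derivative_at_within[OF fdiff_powr_has_field_derivative])
  qed auto
  then show ?thesis
    by simp
qed

text \<open>The constant must be uniform in the exponent: the induction step bounds the
  \<open>K\<close>-th difference at exponent \<open>s - 1\<close>, hence needs the bound on a larger disc.\<close>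
lemma fdiff_powr_bound:
  assumes q: "q > 0"
  shows "\<exists>M\<ge>0. \<forall>s x. norm s \<le> R \<longrightarrow> 0 \<le> x \<longrightarrow>
           norm (fdiff_powr K q s (of_real x)) \<le> M * (x + q) powr (Re s - real K)"
proof (induction K arbitrary: R)
  case 0
  have "norm (fdiff_powr 0 q s (of_real x)) = (x + q) powr Re s" if "0 \<le> x" for s x
    using that q by (simp add: norm_powr_real_powr flip: of_real_add)
  then show ?case
    by (intro exI[of _ 1]) auto
next
  case (Suc K)
  obtain M where M: "M \<ge> 0" "\<And>s x. norm s \<le> R + 1 \<Longrightarrow> 0 \<le> x \<Longrightarrow>
      norm (fdiff_powr K q s (of_real x)) \<le> M * (x + q) powr (Re s - real K)"
    using Suc.IH[of "R + 1"] by blast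
  define C where "C = (1 + 1/q) powr (max R 0 + 1 + real K)"
  show ?case
  proof (intro exI[of _ "max R 0 * M * C"] conjI allI impI)
    show "0 \<le> max R 0 * M * C"
      using M(1) by (simp add: C_def)
    fix s :: complex and x :: real
    assume s: "norm s \<le> R" and x: "0 \<le> x"
    define e where "e = Re s - 1 - real K"
    have e: "\<bar>e\<bar> \<le> max R 0 + 1 + real K"
      unfolding e_def using s abs_Re_le_cmod[of s] by linarith
    have "norm (s - 1) \<le> R + 1"
      using s norm_triangle_ineq4[of s 1] by simp
    have "norm (fdiff_powr (Suc K) q s (of_real x)) \<le> max R 0 * (M * (C * (x + q) powr e))"
    proof (rule norm_fdiff_powr_Suc_le[OF q x])
      fix t assume t: "x \<le> t" "t \<le> x + 1"
      have "norm (fdiff_powr K q (s - 1) (of_real t)) \<le> M * (t + q) powr e"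
        using M(2)[OF \<open>norm (s - 1) \<le> R + 1\<close>, of t] t x by (simp add: e_def)
      also have "\<dots> \<le> M * (C * (x + q) powr e)"
        unfolding C_def using q x t e M(1) by (intro mult_left_mono powr_le_on_unit_shift) auto
      finally show "norm (s * fdiff_powr K q (s - 1) (of_real t)) \<le> max R 0 * (M * (C * (x + q) powr e))"
        unfolding norm_mult using s by (intro mult_mono) auto
    qed
    then show "norm (fdiff_powr (Suc K) q s (of_real x)) \<le> max R 0 * M * C * (x + q) powr (Re s - real (Suc K))"
      by (simp add: e_def algebra_simps)
  qed
qed

lemma filterlim_real_add_sequentially: "filterlim (\<lambda>n::nat. real n + q) at_top sequentially"
  using filterlim_tendsto_add_at_top[OF tendsto_const filterlim_real_sequentially, of q]
  by (simp add: add.commute)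

lemma fdiff_powr_tendsto_0:
  assumes q: "q > 0" and z: "Re z > - real K"
  shows "(\<lambda>n. fdiff_powr K q (-z) (of_nat n)) \<longlonglongrightarrow> 0"
proof -
  obtain M where M: "\<And>s x. norm s \<le> norm z \<Longrightarrow> 0 \<le> x \<Longrightarrow>
      norm (fdiff_powr K q s (of_real x)) \<le> M * (x + q) powr (Re s - real K)"
    using fdiff_powr_bound[OF q, of "norm z" K] by blast
  have "(\<lambda>n. (real n + q) powr (Re (-z) - real K)) \<longlonglongrightarrow> 0"
    using z by (intro tendsto_neg_powr[OF _ filterlim_real_add_sequentially]) simp
  then have bound_0: "(\<lambda>n. M * (real n + q) powr (Re (-z) - real K)) \<longlonglongrightarrow> 0"
    by (rule tendsto_mult_right_zero)
  have "norm (fdiff_powr K q (-z) (of_nat n)) \<le> M * (real n + q) powr (Re (-z) - real K)" for n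
    using M[of "-z" "real n"] by simp
  then show ?thesis
    by (intro Lim_null_comparison[OF _ bound_0] always_eventually allI)
qed

lemma sum_alt_diff:
  fixes b :: "nat \<Rightarrow> 'a :: comm_ring_1"
  shows "(\<Sum>n<N. (-1)^n * (b n - b (Suc n))) = 2 * (\<Sum>n<N. (-1)^n * b n) + (-1)^N * b N - b 0"
  by (induction N) (auto simp: algebra_simps)

lemma sums_alt_diff:
  fixes b :: "nat \<Rightarrow> 'a :: real_normed_field"
  assumes "(\<lambda>n. (-1)^n * b n) sums S"
  shows "(\<lambda>n. (-1)^n * (b n - b (Suc n))) sums (2 * S - b 0)"
proof -
  have "(\<lambda>n. (-1)^n * b n) \<longlonglongrightarrow> 0"
    using assms summable_LIMSEQ_zero sums_summable by blast
  then have "(\<lambda>N. 2 * (\<Sum>n<N. (-1)^n * b n) + (-1)^N * b N - b 0) \<longlonglongrightarrow> 2 * S + 0 - b 0"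
    using assms unfolding sums_def by (intro tendsto_intros)
  then show ?thesis
    unfolding sums_def sum_alt_diff by (simp only: add_0_right)
qed

lemma sums_alt_of_sums_alt_diff:
  fixes b :: "nat \<Rightarrow> 'a :: real_normed_field"
  assumes "b \<longlonglongrightarrow> 0" and "(\<lambda>n. (-1)^n * (b n - b (Suc n))) sums U"
  shows "(\<lambda>n. (-1)^n * b n) sums ((U + b 0) / 2)"
proof -
  have "(\<lambda>n. norm ((-1)^n * b n)) \<longlonglongrightarrow> 0"
    using assms(1) by (simp add: norm_mult norm_power tendsto_norm_zero)
  then have "(\<lambda>n. (-1)^n * b n) \<longlonglongrightarrow> 0"
    by (rule tendsto_norm_zero_cancel)
  then have "(\<lambda>N. ((\<Sum>n<N. (-1)^n * (b n - b (Suc n))) - (-1)^N * b N + b 0) / 2) \<longlonglongrightarrow> (U - 0 + b 0) / 2"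
    using assms(2) unfolding sums_def by (intro tendsto_intros) auto
  then show ?thesis
    unfolding sums_def sum_alt_diff by simp
qed

definition alt_diff_term :: "nat \<Rightarrow> real \<Rightarrow> complex \<Rightarrow> nat \<Rightarrow> complex" where
  "alt_diff_term K q z n = (-1)^n * fdiff_powr K q (-z) (of_nat n)"

text \<open>The \<open>K\<close>-fold Euler transform of \<open>\<Sum>n. (-1)^n (n + q) powr -z\<close>. Its remaining series
  converges for \<open>Re z > 1 - K\<close>, because the \<open>K\<close>-th difference decays like \<open>n powr (-Re z - K)\<close>.\<close>
definition euler_sum :: "nat \<Rightarrow> real \<Rightarrow> complex \<Rightarrow> complex" where
  "euler_sum K q z = (\<Sum>k<K. fdiff_powr k q (-z) 0 / 2 ^ Suc k) + suminf (alt_diff_term K q z) / 2 ^ K"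

lemma alt_diff_term_Suc:
  "alt_diff_term (Suc K) q z = (\<lambda>n. (-1)^n * (fdiff_powr K q (-z) (of_nat n) - fdiff_powr K q (-z) (of_nat (Suc n))))"
  by (simp add: alt_diff_term_def fun_eq_iff add.commute)

lemma euler_sum_Suc:
  assumes "summable (alt_diff_term K q z)"
  shows "summable (alt_diff_term (Suc K) q z) \<and> euler_sum (Suc K) q z = euler_sum K q z"
proof -
  define V where "V = suminf (alt_diff_term K q z)"
  have "alt_diff_term K q z sums V"
    using assms unfolding V_def by (rule summable_sums)
  from sums_alt_diff[OF this[unfolded alt_diff_term_def]]
  have "alt_diff_term (Suc K) q z sums (2 * V - fdiff_powr K q (-z) 0)"
    unfolding alt_diff_term_Suc by simp
  then have "summable (alt_diff_term (Suc K) q z)"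
    and "suminf (alt_diff_term (Suc K) q z) = 2 * V - fdiff_powr K q (-z) 0"
    by (auto simp: sums_iff)
  moreover have "euler_sum K q z = (\<Sum>k<K. fdiff_powr k q (-z) 0 / 2 ^ Suc k)
      + fdiff_powr K q (-z) 0 / 2 ^ Suc K + (2 * V - fdiff_powr K q (-z) 0) / 2 ^ Suc K"
    unfolding euler_sum_def V_def by (simp add: field_simps)
  ultimately show ?thesis
    by (simp add: euler_sum_def)
qed

lemma euler_sum_eq_of_le:
  assumes "summable (alt_diff_term K q z)" and "K \<le> K'"
  shows "summable (alt_diff_term K' q z) \<and> euler_sum K' q z = euler_sum K q z"
  using assms(2)
proof (induction K' rule: dec_induct)
  case base
  then show ?case using assms(1) by simp
next
  case (step m)
  then show ?case using euler_sum_Suc[of m q z] by simp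
qed

lemma alt_diff_term_bound_on_ball:
  assumes q: "q > 0" and z0: "Re z0 > 1 - real K"
  obtains d h where "d > 0" "summable h" "\<And>n. 0 \<le> h n"
    "\<And>n y. n \<ge> 1 \<Longrightarrow> y \<in> ball z0 d \<Longrightarrow> norm (alt_diff_term K q y n) \<le> h n"
proof -
  define d where "d = (Re z0 - 1 + real K) / 2"
  have "d > 0"
    using z0 by (simp add: d_def)
  obtain M where M: "M \<ge> 0" "\<And>s x. norm s \<le> norm z0 + d \<Longrightarrow> 0 \<le> x \<Longrightarrow>
      norm (fdiff_powr K q s (of_real x)) \<le> M * (x + q) powr (Re s - real K)"
    using fdiff_powr_bound[OF q, of "norm z0 + d" K] by blast
  show ?thesis
  proof (rule that[of d "\<lambda>n. M * real n powr (-1 - d)"])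
    show "d > 0" by fact
    show "summable (\<lambda>n. M * real n powr (-1 - d))"
      using \<open>d > 0\<close> by (intro summable_mult) (simp add: summable_real_powr_iff)
    show "0 \<le> M * real n powr (-1 - d)" for n
      using M(1) by simp
    fix n :: nat and y
    assume n: "n \<ge> 1" and y: "y \<in> ball z0 d"
    then have "norm (y - z0) < d"
      by (simp add: dist_norm norm_minus_commute)
    then have "norm (-y) \<le> norm z0 + d" and "Re y > 1 - real K + d"
      using norm_triangle_ineq2[of y z0] abs_Re_le_cmod[of "y - z0"] by (auto simp: d_def field_simps)
    have "norm (alt_diff_term K q y n) = norm (fdiff_powr K q (-y) (of_real (real n)))"
      by (simp add: alt_diff_term_def norm_mult norm_power)
    also have "\<dots> \<le> M * (real n + q) powr (Re (-y) - real K)"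
      using M(2)[OF \<open>norm (-y) \<le> norm z0 + d\<close>, of "real n"] by simp
    also have "\<dots> \<le> M * (real n + q) powr (-1 - d)"
      using \<open>Re y > 1 - real K + d\<close> n q M(1) by (intro mult_left_mono powr_mono) auto
    also have "\<dots> \<le> M * real n powr (-1 - d)"
      using n q M(1) \<open>d > 0\<close> by (intro mult_left_mono powr_mono2') auto
    finally show "norm (alt_diff_term K q y n) \<le> M * real n powr (-1 - d)" .
  qed
qed

lemma summable_alt_diff_term:
  assumes "q > 0" and "Re z > 1 - real K"
  shows "summable (alt_diff_term K q z)"
proof -
  obtain d h where "d > 0" "summable h" "\<And>n. 0 \<le> h n"
    and bound: "\<And>n y. n \<ge> 1 \<Longrightarrow> y \<in> ball z d \<Longrightarrow> norm (alt_diff_term K q y n) \<le> h n"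
    using alt_diff_term_bound_on_ball[OF assms] by metis
  have "z \<in> ball z d"
    using \<open>d > 0\<close> by simp
  then have "norm (alt_diff_term K q z n) \<le> h n" if "n \<ge> 1" for n
    using bound that by blast
  then show ?thesis
    by (rule summable_comparison_test'[OF \<open>summable h\<close>])
qed

lemma holomorphic_on_suminf_alt_diff_term:
  assumes q: "q > 0"
  shows "(\<lambda>z. suminf (alt_diff_term K q z)) holomorphic_on {z. Re z > 1 - real K}"
proof -
  let ?S = "{z. Re z > 1 - real K}"
  have "open ?S"
    by (simp add: open_halfspace_Re_gt)
  have "(\<lambda>z. alt_diff_term K q z n) holomorphic_on UNIV" for n
    unfolding alt_diff_term_def by (intro holomorphic_intros holomorphic_on_fdiff_powr)
  then have deriv: "((\<lambda>z. alt_diff_term K q z n) has_field_derivative deriv (\<lambda>z. alt_diff_term K q z n) x) (at x)" for n x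
    by (rule holomorphic_derivI) auto
  have "\<exists>d (h :: nat \<Rightarrow> complex). 0 < d \<and> summable h \<and> range h \<subseteq> \<real>\<^sub>\<ge>\<^sub>0 \<and>
      (\<forall>\<^sub>F n in sequentially. \<forall>y\<in>ball x d \<inter> ?S. norm (alt_diff_term K q y n) \<le> norm (h n))"
    if "x \<in> ?S" for x
  proof -
    have "Re x > 1 - real K"
      using that by simp
    then obtain d h where "d > 0" "summable h" "\<And>n. 0 \<le> h n"
      and bound: "\<And>n y. n \<ge> 1 \<Longrightarrow> y \<in> ball x d \<Longrightarrow> norm (alt_diff_term K q y n) \<le> h n"
      using alt_diff_term_bound_on_ball[OF q] by metis
    show ?thesis
    proof (intro exI conjI)
      show "0 < d" by fact
      show "summable (\<lambda>n. complex_of_real (h n))"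
        using \<open>summable h\<close> by (simp add: summable_of_real_iff)
      show "range (\<lambda>n. complex_of_real (h n)) \<subseteq> \<real>\<^sub>\<ge>\<^sub>0"
        using \<open>\<And>n. 0 \<le> h n\<close> by (auto simp: nonneg_Reals_def)
      show "\<forall>\<^sub>F n in sequentially. \<forall>y\<in>ball x d \<inter> ?S. norm (alt_diff_term K q y n) \<le> norm (complex_of_real (h n))"
      proof (intro eventually_sequentiallyI[of 1] ballI)
        fix n :: nat and y assume "n \<ge> 1" and "y \<in> ball x d \<inter> ?S"
        then show "norm (alt_diff_term K q y n) \<le> norm (complex_of_real (h n))"
          using bound[of n y] \<open>0 \<le> h n\<close> by simp
      qed
    qed
  qed
  from series_and_derivative_comparison_complex[OF \<open>open ?S\<close> deriv this]
  obtain g g' where g: "\<And>x. x \<in> ?S \<Longrightarrow> alt_diff_term K q x sums g x \<and> (g has_field_derivative g' x) (at x)"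
    by blast
  then have "g holomorphic_on ?S"
    using \<open>open ?S\<close> by (subst holomorphic_on_open) auto
  then show ?thesis
    by (rule holomorphic_transform) (use g sums_unique in auto)
qed

lemma holomorphic_on_euler_sum:
  assumes "q > 0"
  shows "euler_sum K q holomorphic_on {z. Re z > 1 - real K}"
  unfolding euler_sum_def[abs_def]
  by (intro holomorphic_intros holomorphic_on_suminf_alt_diff_term[OF assms] holomorphic_on_fdiff_powr) auto

definition zetaE_continuation :: "real \<Rightarrow> complex \<Rightarrow> complex" where
  "zetaE_continuation q z = euler_sum (nat \<lceil>1 - Re z\<rceil> + 1) q z"

lemma zetaE_continuation_eq_euler_sum:
  assumes q: "q > 0" and z: "Re z > 1 - real K"
  shows "zetaE_continuation q z = euler_sum K q z"
proof -
  define K0 where "K0 = nat \<lceil>1 - Re z\<rceil> + 1"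
  have z0: "Re z > 1 - real K0"
    unfolding K0_def by linarith
  have "euler_sum (max K K0) q z = euler_sum K q z"
    using euler_sum_eq_of_le[OF summable_alt_diff_term[OF q z], of "max K K0"] by simp
  moreover have "euler_sum (max K K0) q z = euler_sum K0 q z"
    using euler_sum_eq_of_le[OF summable_alt_diff_term[OF q z0], of "max K K0"] by simp
  ultimately show ?thesis
    by (simp add: zetaE_continuation_def K0_def)
qed

lemma holomorphic_zetaE_continuation:
  assumes q: "q > 0"
  shows "zetaE_continuation q holomorphic_on UNIV"
proof -
  have "zetaE_continuation q field_differentiable (at z)" for z
  proof -
    define K where "K = nat \<lceil>1 - Re z\<rceil> + 1"
    have "zetaE_continuation q holomorphic_on {z. Re z > 1 - real K}"
      by (rule holomorphic_transform[OF holomorphic_on_euler_sum[OF q]])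
         (use zetaE_continuation_eq_euler_sum[OF q] in auto)
    moreover have "z \<in> {z. Re z > 1 - real K}"
      unfolding K_def by simp linarith
    ultimately show ?thesis
      by (intro holomorphic_on_imp_differentiable_at) (auto simp: open_halfspace_Re_gt)
  qed
  then show ?thesis
    by (auto simp: holomorphic_on_def field_differentiable_at_within)
qed

lemma zetaE_continuation_sums:
  assumes q: "q > 0" and w: "Re w > 0"
  shows "(\<lambda>n. (-1) ^ n / (complex_of_real (real n + q)) powr w) sums zetaE_continuation q w"
proof -
  define b where "b n = fdiff_powr 0 q (-w) (of_nat n)" for n
  have "b \<longlonglongrightarrow> 0"
    unfolding b_def using fdiff_powr_tendsto_0[OF q, where K = 0 and z = w] w by simp
  moreover have "alt_diff_term 1 q w sums suminf (alt_diff_term 1 q w)"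
    using summable_alt_diff_term[OF q, where K = 1 and z = w] w by (simp add: summable_sums)
  then have "(\<lambda>n. (-1)^n * (b n - b (Suc n))) sums suminf (alt_diff_term 1 q w)"
    by (simp add: alt_diff_term_Suc b_def)
  ultimately have "(\<lambda>n. (-1)^n * b n) sums ((suminf (alt_diff_term 1 q w) + b 0) / 2)"
    by (rule sums_alt_of_sums_alt_diff)
  moreover have "zetaE_continuation q w = (suminf (alt_diff_term 1 q w) + b 0) / 2"
    using zetaE_continuation_eq_euler_sum[OF q, where K = 1 and z = w] w by (simp add: euler_sum_def b_def)
  moreover have "(\<lambda>n. (-1)^n * b n) = (\<lambda>n. (-1) ^ n / (complex_of_real (real n + q)) powr w)"
    by (simp add: b_def powr_minus_divide fun_eq_iff)
  ultimately show ?thesis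
    by (simp only:)
qed

lemma zetaE_eq_continuation:
  assumes q: "q > 0"
  shows "zetaE z q = zetaE_continuation q z"
proof -
  let ?P = "\<lambda>f. f holomorphic_on UNIV \<and> (\<forall>w. Re w > 0 \<longrightarrow>
         (\<lambda>n. (-1) ^ n / (complex_of_real (real n + q)) powr w) sums f w)"
  have "g = zetaE_continuation q" if "?P g" for g
  proof
    fix x
    show "g x = zetaE_continuation q x"
    proof (rule analytic_continuation_open[of "{w. Re w > 0}" UNIV g "zetaE_continuation q"])
      show "open {w. Re w > 0}"
        by (simp add: open_halfspace_Re_gt)
      show "{w. Re w > 0} \<noteq> {}"
        by (auto intro: exI[of _ 1])
      show "g w = zetaE_continuation q w" if "w \<in> {w. Re w > 0}" for w
        using that \<open>?P g\<close> zetaE_continuation_sums[OF q] by (auto intro: sums_unique2)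
      show "g holomorphic_on UNIV"
        using \<open>?P g\<close> by blast
    qed (use holomorphic_zetaE_continuation[OF q] in auto)
  qed
  moreover have "?P (zetaE_continuation q)"
    using holomorphic_zetaE_continuation[OF q] zetaE_continuation_sums[OF q] by blast
  ultimately have "(THE f. ?P f) = zetaE_continuation q"
    by (intro the_equality)
  then show ?thesis
    unfolding zetaE_def by simp
qed

lemma zetaE_eq_euler_sum:
  assumes "q > 0" and "Re z > 1 - real K"
  shows "zetaE z q = euler_sum K q z"
  using zetaE_eq_continuation[OF assms(1)] zetaE_continuation_eq_euler_sum[OF assms] by simp

definition euler_integrand :: "real \<Rightarrow> complex \<Rightarrow> real \<Rightarrow> complex" where
  "euler_integrand q z t = complex_of_real (E0bar (-t)) / complex_of_real (t + q) powr (z + 1)"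

definition cell_integral :: "real \<Rightarrow> complex \<Rightarrow> nat \<Rightarrow> complex" where
  "cell_integral q z n = integral {real n..real n + 1} (\<lambda>t. complex_of_real (t + q) powr (-z - 1))"

lemma E0bar_minus_on_cell:
  assumes "real n < t" "t < real n + 1"
  shows "E0bar (-t) = -((-1)^n)"
proof -
  have "\<lfloor>-t\<rfloor> = - int n - 1"
    using assms by (subst floor_eq_iff) auto
  then show ?thesis
    by (cases "even n") (simp_all add: E0bar_def)
qed

lemma euler_integrand_eq:
  "euler_integrand q z t = complex_of_real (E0bar (-t)) * complex_of_real (t + q) powr (-z - 1)"
proof -
  have "-z - 1 = -(z + 1)"
    by simp
  then show ?thesis
    unfolding euler_integrand_def by (simp only: powr_minus_divide) simp
qed

lemma norm_euler_integrand:
  "norm (euler_integrand q z t) = norm (complex_of_real (t + q) powr (-z - 1))"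
  by (simp add: euler_integrand_eq norm_mult E0bar_def)

lemma has_vector_derivative_powr_shift:
  assumes "t > -q"
  shows "((\<lambda>t. complex_of_real (t + q) powr s) has_vector_derivative
           s * complex_of_real (t + q) powr (s - 1)) (at t within S)"
proof -
  have "Re (complex_of_real t) > -q"
    using assms by simp
  from has_vector_derivative_real_field[OF fdiff_powr_has_field_derivative[OF this, of 0 s]]
  show ?thesis
    by (simp add: has_vector_derivative_at_within)
qed

lemma integrable_powr_shift:
  assumes "a > -q"
  shows "(\<lambda>t. complex_of_real (t + q) powr s) integrable_on {a..b}"
proof (rule integrable_continuous_interval)
  show "continuous_on {a..b} (\<lambda>t. complex_of_real (t + q) powr s)"
    by (rule continuous_on_vector_derivative[OF has_vector_derivative_powr_shift]) (use assms in auto)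
qed

lemma mult_cell_integral:
  assumes q: "q > 0"
  shows "z * cell_integral q z n = fdiff_powr 1 q (-z) (of_nat n)"
proof -
  have "((\<lambda>t. -z * complex_of_real (t + q) powr (-z - 1)) has_integral
         complex_of_real (real n + 1 + q) powr (-z) - complex_of_real (real n + q) powr (-z)) {real n..real n + 1}"
    using q by (intro fundamental_theorem_of_calculus has_vector_derivative_powr_shift) (auto simp: add_ac)
  moreover have "((\<lambda>t. -z * complex_of_real (t + q) powr (-z - 1)) has_integral -z * cell_integral q z n) {real n..real n + 1}"
    unfolding cell_integral_def using q
    by (intro has_integral_mult_right integrable_integral integrable_powr_shift) auto
  ultimately have "-z * cell_integral q z n = complex_of_real (real n + 1 + q) powr (-z) - complex_of_real (real n + q) powr (-z)"
    using has_integral_unique by blast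
  then show ?thesis
    by (simp add: algebra_simps)
qed

lemma norm_integral_le_powr:
  fixes f :: "real \<Rightarrow> 'a :: real_normed_vector"
  assumes "f integrable_on {a..b}" "a + q > 0" "a \<le> b" "b \<le> a + 1" "e \<le> 0" "C \<ge> 0"
    and "\<And>t. t \<in> {a..b} \<Longrightarrow> norm (f t) \<le> C * (t + q) powr e"
  shows "norm (integral {a..b} f) \<le> C * (a + q) powr e"
proof -
  have "norm (f t) \<le> C * (a + q) powr e" if "t \<in> {a..b}" for t
  proof -
    have "(t + q) powr e \<le> (a + q) powr e"
      using that assms(2,5) by (intro powr_mono2') auto
    then show ?thesis
      using assms(6) assms(7)[OF that] by (meson mult_left_mono order.trans)
  qed
  then have "norm (integral {a..b} f) \<le> C * (a + q) powr e * Henstock_Kurzweil_Integration.content (cbox a b)"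
    using assms(1) by (intro has_integral_bound[of _ f]) (auto intro: mult_nonneg_nonneg assms(6))
  also have "\<dots> \<le> C * (a + q) powr e * 1"
    using assms(3,4,6) by (intro mult_left_mono) auto
  finally show ?thesis
    by simp
qed

lemma norm_powr_shift:
  "t > -q \<Longrightarrow> norm (complex_of_real (t + q) powr s) = (t + q) powr Re s"
  by (simp add: norm_powr_real_powr)

lemma norm_cell_integral_le:
  assumes "q > 0" and "Re z > -1"
  shows "norm (cell_integral q z n) \<le> (real n + q) powr (-Re z - 1)"
proof -
  have "norm (integral {real n..real n + 1} (\<lambda>t. complex_of_real (t + q) powr (-z - 1)))
        \<le> 1 * (real n + q) powr (-Re z - 1)"
  proof (rule norm_integral_le_powr)
    show "(\<lambda>t. complex_of_real (t + q) powr (-z - 1)) integrable_on {real n..real n + 1}"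
      using assms by (intro integrable_powr_shift) auto
    show "norm (complex_of_real (t + q) powr (-z - 1)) \<le> 1 * (t + q) powr (-Re z - 1)"
      if "t \<in> {real n..real n + 1}" for t
      using that assms by (subst norm_powr_shift) auto
  qed (use assms in auto)
  then show ?thesis
    by (simp add: cell_integral_def)
qed

lemma cell_integral_diff_has_integral:
  assumes "q > 0"
  shows "((\<lambda>t. fdiff_powr 1 q (-z - 1) (of_real t)) has_integral
           cell_integral q z n - cell_integral q z (Suc n)) {real n..real n + 1}"
proof -
  let ?p = "\<lambda>t. complex_of_real (t + q) powr (-z - 1)"
  have "cell_integral q z (Suc n) = integral {real n..real n + 1} (\<lambda>t. ?p (t + 1))"
    using integral_shift_real_ivl[of "real n + 1" 1 "real n + 2" ?p]
    by (simp add: cell_integral_def add_ac)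
  moreover have "?p integrable_on {real n..real n + 1}" "(\<lambda>t. ?p (t + 1)) integrable_on {real n..real n + 1}"
    using assms integrable_powr_shift[where a = "real n" and q = q and b = "real n + 1"]
      integrable_powr_shift[where a = "real n" and q = "q + 1" and b = "real n + 1"]
    by (auto simp: add_ac)
  ultimately have "((\<lambda>t. ?p t - ?p (t + 1)) has_integral cell_integral q z n - cell_integral q z (Suc n)) {real n..real n + 1}"
    unfolding cell_integral_def by (intro has_integral_diff) (auto intro: integrable_integral)
  then show ?thesis
    by (simp add: add_ac)
qed

lemma norm_cell_integral_diff_le:
  assumes q: "q > 0" and z: "Re z > -1"
  obtains M where "M \<ge> 0"
    "\<And>n. norm (cell_integral q z n - cell_integral q z (Suc n)) \<le> M * (real n + q) powr (-Re z - 2)"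
proof -
  obtain M where M: "M \<ge> 0" "\<And>x. 0 \<le> x \<Longrightarrow>
      norm (fdiff_powr 1 q (-z - 1) (of_real x)) \<le> M * (x + q) powr (-Re z - 2)"
  proof -
    obtain M where "M \<ge> 0" and M: "\<And>s x. norm s \<le> norm (-z - 1) \<Longrightarrow> 0 \<le> x \<Longrightarrow>
        norm (fdiff_powr 1 q s (of_real x)) \<le> M * (x + q) powr (Re s - real 1)"
      using fdiff_powr_bound[OF q, of "norm (-z - 1)" 1] by blast
    have "norm (fdiff_powr 1 q (-z - 1) (of_real x)) \<le> M * (x + q) powr (-Re z - 2)" if "0 \<le> x" for x
      using M[OF order.refl that] by (simp add: algebra_simps)
    with \<open>M \<ge> 0\<close> show ?thesis
      using that by blast
  qed
  show ?thesis
  proof (rule that[OF M(1)])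
    fix n
    let ?d = "\<lambda>t. fdiff_powr 1 q (-z - 1) (of_real t)"
    have "norm (integral {real n..real n + 1} ?d) \<le> M * (real n + q) powr (-Re z - 2)"
    proof (rule norm_integral_le_powr)
      show "?d integrable_on {real n..real n + 1}"
        using cell_integral_diff_has_integral[OF q] by blast
      show "norm (?d t) \<le> M * (t + q) powr (-Re z - 2)" if "t \<in> {real n..real n + 1}" for t
        using that by (intro M(2)) auto
    qed (use q z M(1) in auto)
    then show "norm (cell_integral q z n - cell_integral q z (Suc n)) \<le> M * (real n + q) powr (-Re z - 2)"
      using cell_integral_diff_has_integral[OF q, of z n] by (simp add: integral_unique)
  qed
qed

lemma summable_alt_cell_integral:
  assumes q: "q > 0" and z: "Re z > -1"
  shows "summable (\<lambda>n. (-1)^n * cell_integral q z n)"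
proof -
  have "(\<lambda>n. (real n + q) powr (-Re z - 1)) \<longlonglongrightarrow> 0"
    using z by (intro tendsto_neg_powr[OF _ filterlim_real_add_sequentially]) simp
  then have "cell_integral q z \<longlonglongrightarrow> 0"
    by (rule Lim_null_comparison[rotated]) (use norm_cell_integral_le[OF q z] in simp)
  obtain M where "M \<ge> 0"
    and M: "\<And>n. norm (cell_integral q z n - cell_integral q z (Suc n)) \<le> M * (real n + q) powr (-Re z - 2)"
    using norm_cell_integral_diff_le[OF q z] by metis
  have "summable (\<lambda>n. M * real n powr (-Re z - 2))"
    using z by (intro summable_mult) (simp add: summable_real_powr_iff)
  moreover have "norm ((-1)^n * (cell_integral q z n - cell_integral q z (Suc n))) \<le> M * real n powr (-Re z - 2)"
    if "n \<ge> 1" for n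
  proof -
    have "(real n + q) powr (-Re z - 2) \<le> real n powr (-Re z - 2)"
      using that q z by (intro powr_mono2') auto
    then have "M * (real n + q) powr (-Re z - 2) \<le> M * real n powr (-Re z - 2)"
      using \<open>M \<ge> 0\<close> by (rule mult_left_mono)
    then show ?thesis
      using M[of n] by (simp add: norm_mult norm_power)
  qed
  ultimately have "summable (\<lambda>n. (-1)^n * (cell_integral q z n - cell_integral q z (Suc n)))"
    by (rule summable_comparison_test'[where N = 1])
  then show ?thesis
    using sums_alt_of_sums_alt_diff[OF \<open>cell_integral q z \<longlonglongrightarrow> 0\<close>] by (auto simp: summable_def)
qed

lemma euler_integrand_has_integral_cell:
  assumes "q > 0"
  shows "(euler_integrand q z has_integral -((-1)^n) * cell_integral q z n) {real n..real n + 1}"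
proof (rule has_integral_spike_finite[where S = "{real n, real n + 1}"])
  show "((\<lambda>t. -((-1)^n) * complex_of_real (t + q) powr (-z - 1)) has_integral
         -((-1)^n) * cell_integral q z n) {real n..real n + 1}"
    unfolding cell_integral_def using assms
    by (intro has_integral_mult_right integrable_integral integrable_powr_shift) auto
  show "euler_integrand q z t = -((-1)^n) * complex_of_real (t + q) powr (-z - 1)"
    if "t \<in> {real n..real n + 1} - {real n, real n + 1}" for t
  proof -
    from that have "real n < t" "t < real n + 1"
      by auto
    then show ?thesis
      by (simp add: euler_integrand_eq E0bar_minus_on_cell)
  qed
qed simp

lemma euler_integrand_has_integral_cells:
  assumes "q > 0" and "\<alpha> \<le> N"
  shows "(euler_integrand q z has_integral
           (\<Sum>n<\<alpha>. (-1)^n * cell_integral q z n) - (\<Sum>n<N. (-1)^n * cell_integral q z n)) {real \<alpha>..real N}"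
  using assms(2)
proof (induction N rule: dec_induct)
  case base
  then show ?case
    using has_integral_refl(1)[of "euler_integrand q z" "real \<alpha>"] by simp
next
  case (step m)
  have "(euler_integrand q z has_integral
         (\<Sum>n<\<alpha>. (-1)^n * cell_integral q z n) - (\<Sum>n<m. (-1)^n * cell_integral q z n)
           + -((-1)^m) * cell_integral q z m) {real \<alpha>..real m + 1}"
    using step by (intro has_integral_combine[OF _ _ _ euler_integrand_has_integral_cell[OF assms(1)]]) auto
  then show ?case
    by (simp add: algebra_simps)
qed

lemma integrable_euler_integrand:
  assumes "q > 0"
  shows "euler_integrand q z integrable_on {real \<alpha>..T}"
proof (rule integrable_subinterval_real)
  let ?N = "max \<alpha> (nat \<lceil>T\<rceil>)"
  show "euler_integrand q z integrable_on {real \<alpha>..real ?N}"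
    by (rule has_integral_integrable[OF euler_integrand_has_integral_cells[OF assms]]) simp
  show "{real \<alpha>..T} \<subseteq> {real \<alpha>..real ?N}"
    by (auto simp: of_nat_max) linarith
qed

lemma norm_integral_euler_integrand_le:
  assumes q: "q > 0" and z: "Re z > -1" and T: "real N \<le> T" "T \<le> real N + 1"
  shows "norm (integral {real N..T} (euler_integrand q z)) \<le> (real N + q) powr (-Re z - 1)"
proof -
  have "norm (integral {real N..T} (euler_integrand q z)) \<le> 1 * (real N + q) powr (-Re z - 1)"
  proof (rule norm_integral_le_powr)
    show "euler_integrand q z integrable_on {real N..T}"
      by (rule integrable_euler_integrand[OF q])
    show "norm (euler_integrand q z t) \<le> 1 * (t + q) powr (-Re z - 1)" if "t \<in> {real N..T}" for t
      unfolding norm_euler_integrand using that q by (subst norm_powr_shift) auto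
  qed (use q z T in auto)
  then show ?thesis
    by simp
qed

lemma filterlim_nat_floor_at_top: "filterlim (\<lambda>T::real. nat \<lfloor>T\<rfloor>) sequentially at_top"
  by (rule filterlim_compose[OF filterlim_nat_sequentially filterlim_floor_sequentially])

text \<open>Along integers the integral is a partial sum of the alternating series; in between,
  it moves by at most the size of the integrand.\<close>
lemma tendsto_integral_euler_integrand:
  assumes q: "q > 0" and z: "Re z > -1"
    and C: "(\<lambda>n. (-1)^n * cell_integral q z n) sums C"
  shows "((\<lambda>T. integral {real \<alpha>..T} (euler_integrand q z))
           \<longlongrightarrow> (\<Sum>n<\<alpha>. (-1)^n * cell_integral q z n) - C) at_top"
proof -
  define L where "L = (\<Sum>n<\<alpha>. (-1)^n * cell_integral q z n) - C"
  define I where "I T = integral {real \<alpha>..T} (euler_integrand q z)" for T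
  define N :: "real \<Rightarrow> nat" where "N T = nat \<lfloor>T\<rfloor>" for T
  have "(\<lambda>M. (\<Sum>n<\<alpha>. (-1)^n * cell_integral q z n) - (\<Sum>n<M. (-1)^n * cell_integral q z n)) \<longlonglongrightarrow> L"
    unfolding L_def using C unfolding sums_def by (intro tendsto_intros)
  moreover have "(\<Sum>n<\<alpha>. (-1)^n * cell_integral q z n) - (\<Sum>n<M. (-1)^n * cell_integral q z n) = I (real M)"
    if "\<alpha> \<le> M" for M
    unfolding I_def using euler_integrand_has_integral_cells[OF q that] by (rule integral_unique[symmetric])
  then have "\<forall>\<^sub>F M in sequentially.
      (\<Sum>n<\<alpha>. (-1)^n * cell_integral q z n) - (\<Sum>n<M. (-1)^n * cell_integral q z n) = I (real M)"
    by (intro eventually_sequentiallyI[of \<alpha>])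
  ultimately have "(\<lambda>M. I (real M)) \<longlonglongrightarrow> L"
    by (rule Lim_transform_eventually)
  then have lim_floor: "((\<lambda>T. I (real (N T))) \<longlongrightarrow> L) at_top"
    unfolding N_def by (rule filterlim_compose[OF _ filterlim_nat_floor_at_top])
  have "(\<lambda>M. (real M + q) powr (-Re z - 1)) \<longlonglongrightarrow> 0"
    using z by (intro tendsto_neg_powr[OF _ filterlim_real_add_sequentially]) simp
  then have "((\<lambda>T. (real (N T) + q) powr (-Re z - 1)) \<longlongrightarrow> 0) at_top"
    unfolding N_def by (rule filterlim_compose[OF _ filterlim_nat_floor_at_top])
  moreover have "\<forall>\<^sub>F T in at_top. norm (I T - I (real (N T))) \<le> (real (N T) + q) powr (-Re z - 1)"
  proof (rule eventually_mono[OF eventually_ge_at_top[of "real \<alpha>"]])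
    fix T assume T: "real \<alpha> \<le> T"
    then have "int \<alpha> \<le> \<lfloor>T\<rfloor>"
      by (simp add: le_floor_iff)
    then have N: "real \<alpha> \<le> real (N T)" "real (N T) \<le> T" "T \<le> real (N T) + 1"
      using T by (simp_all add: N_def le_nat_iff)
    have "I T = I (real (N T)) + integral {real (N T)..T} (euler_integrand q z)"
      unfolding I_def
      by (rule Henstock_Kurzweil_Integration.integral_combine[OF N(1,2) integrable_euler_integrand[OF q], symmetric])
    then show "norm (I T - I (real (N T))) \<le> (real (N T) + q) powr (-Re z - 1)"
      using norm_integral_euler_integrand_le[OF q z N(2,3)] by simp
  qed
  ultimately have "((\<lambda>T. I T - I (real (N T))) \<longlongrightarrow> 0) at_top"
    by (rule Lim_null_comparison[rotated])
  from tendsto_add[OF lim_floor this] have "((\<lambda>T. I (real (N T)) + (I T - I (real (N T)))) \<longlongrightarrow> L + 0) at_top" .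
  then show ?thesis
    unfolding I_def[symmetric] L_def[symmetric] by simp
qed

theorem proposition3p1:
  fixes q :: real and z :: complex and \<alpha> :: nat
  assumes "q > 0" and "Re z > -1"
  shows "\<exists>L. ((\<lambda>T. integral {real \<alpha>..T}
              (\<lambda>t. complex_of_real (E0bar (-t)) / (complex_of_real (t + q)) powr (z + 1)))
            \<longlongrightarrow> L) at_top \<and>
         zetaE z q = (\<Sum>n=0..\<alpha>. (-1) ^ n / (complex_of_real (real n + q)) powr z)
            - 1/2 * ((-1) ^ \<alpha> / (complex_of_real (real \<alpha> + q)) powr z)
            - 1/2 * z * L"
proof -
  note q = assms(1) and z = assms(2)
  define a where "a n = fdiff_powr 0 q (-z) (of_nat n)" for n
  define C where "C = (\<Sum>n. (-1)^n * cell_integral q z n)"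
  define L where "L = (\<Sum>n<\<alpha>. (-1)^n * cell_integral q z n) - C"
  have C: "(\<lambda>n. (-1)^n * cell_integral q z n) sums C"
    unfolding C_def using summable_alt_cell_integral[OF q z] by (rule summable_sums)
  have alt_diff_term_1: "alt_diff_term 1 q z n = z * ((-1)^n * cell_integral q z n)" for n
    by (simp add: alt_diff_term_def mult_cell_integral[OF q])
  have V: "alt_diff_term 1 q z sums (z * C)"
    unfolding alt_diff_term_1 using sums_mult[OF C] .
  have "zetaE z q = euler_sum 2 q z"
    using zetaE_eq_euler_sum[OF q] z by simp
  also have "\<dots> = euler_sum 1 q z"
    using euler_sum_Suc[OF sums_summable[OF V]] by (simp add: numeral_2_eq_2)
  also have "\<dots> = a 0 / 2 + z * C / 2"
    using V by (simp add: euler_sum_def a_def sums_iff)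
  finally have zeta: "zetaE z q = a 0 / 2 + z * C / 2" .
  have "z * (\<Sum>n<\<alpha>. (-1)^n * cell_integral q z n) = (\<Sum>n<\<alpha>. alt_diff_term 1 q z n)"
    by (simp only: alt_diff_term_1 sum_distrib_left)
  also have "\<dots> = (\<Sum>n<\<alpha>. (-1)^n * (a n - a (Suc n)))"
    unfolding One_nat_def alt_diff_term_Suc a_def ..
  finally have "z * L = (\<Sum>n<\<alpha>. (-1)^n * (a n - a (Suc n))) - z * C"
    unfolding L_def by (simp add: right_diff_distrib)
  also have "\<dots> = 2 * (\<Sum>n<\<alpha>. (-1)^n * a n) + (-1)^\<alpha> * a \<alpha> - a 0 - z * C"
    by (simp add: sum_alt_diff)
  finally have zL: "z * L = 2 * (\<Sum>n<\<alpha>. (-1)^n * a n) + (-1)^\<alpha> * a \<alpha> - a 0 - z * C" .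
  have terms: "(-1) ^ n / (complex_of_real (real n + q)) powr z = (-1)^n * a n" for n
    by (simp add: a_def powr_minus_divide)
  show ?thesis
  proof (intro exI conjI)
    show "((\<lambda>T. integral {real \<alpha>..T}
            (\<lambda>t. complex_of_real (E0bar (-t)) / (complex_of_real (t + q)) powr (z + 1))) \<longlongrightarrow> L) at_top"
      using tendsto_integral_euler_integrand[OF q z C] unfolding L_def euler_integrand_def .
    have half: "1/2 * z * L = (z * L) / 2"
      by simp
    show "zetaE z q = (\<Sum>n=0..\<alpha>. (-1) ^ n / (complex_of_real (real n + q)) powr z)
            - 1/2 * ((-1) ^ \<alpha> / (complex_of_real (real \<alpha> + q)) powr z) - 1/2 * z * L"
      unfolding zeta terms half zL by (simp add: atLeast0AtMost lessThan_Suc_atMost[symmetric] field_simps)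
  qed
qed

end
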